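(* Let $D\subseteq\mathbb{R}^n$ be nonempty, convex, closed and bounded, and let $f:\mathbb{R}^n\to\mathbb{R}$ be continuously differentiable. Let $\{x^k\}$ be generated by Method (CGMS) (described in the context) and suppose the method does not terminate, so that $\{x^k\}$ is infinite. Then: (i) the sequence $\{x^k\}$ has a limit point which belongs to $D^0$; (ii) if, in addition, $f$ is pseudo-convex on $D$, then all limit points of $\{x^k\}$ belong to $D^*$, and $\lim_{k\to\infty} f(x^k)=f^*$.
   Context: Notation: $f'(x)$ is the gradient of $f$; $\langle\cdot,\cdot\rangle$ the Euclidean inner product. The problem is $\min_{x\in D} f(x)$; $f^*=\inf_{x\in D}f(x)$ and $D^*$ is its solution set. $D^0$ is the set of stationary points, i.e. of $x^*\in D$ with $\langle f'(x^* ),x-x^*\rangle\ge 0$ for all $x\in D$. $Z(x)$ denotes the set of minimizers of $y\mapsto\langle f'(x),y\rangle$ over $y\in D$. A differentiable $\varphi$ is pseudo-convex on $D$ if for all $x,y\in D$, $\langle\varphi'(x),y-x\rangle\ge0$ implies $\varphi(y)\ge\varphi(x)$. Method (CGMS): Choose $x^0\in D$, $\beta\in(0,1)$, and a sequence of numbers $\tau_l\in(0,1)$, $l=0,1,\dots$, with $\tau_l\to0$. Set $k=0$, $l=0$ and choose $\lambda_0\in(0,\tau_0]$. Iteration $k$: (Step 1) find $y^k\in Z(x^k)$, set $d^k=y^k-x^k$; if $\langle f'(x^k),d^k\rangle=0$, stop. (Step 2) Set $x^{k+1}=x^k+\lambda_k d^k$. If $f(x^{k+1})\le f(x^k)+\beta\lambda_k\langle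 f'(x^k),d^k\rangle$, choose any $\lambda_{k+1}\in[\lambda_k,\tau_l]$ (with $l$ unchanged). Otherwise set $\lambda'_{k+1}=\min\{\lambda_k,\tau_{l+1}\}$, replace $l$ by $l+1$, and choose any $\lambda_{k+1}\in(0,\lambda'_{k+1}]$. Set $k=k+1$ and return to Step 1. *)

theory Defs
  imports "HOL-Analysis.Analysis"
begin

definition lin_min_set :: "'a::euclidean_space set \<Rightarrow> ('a \<Rightarrow> 'a) \<Rightarrow> 'a \<Rightarrow> 'a set" where
  "lin_min_set D f' x = {y \<in> D. \<forall>z\<in>D. f' x \<bullet> y \<le> f' x \<bullet> z}"

definition stationary_set :: "'a::euclidean_space set \<Rightarrow> ('a \<Rightarrow> 'a) \<Rightarrow> 'a set" where
  "stationary_set D f' = {xs \<in> D. \<forall>z\<in>D. f' xs \<bullet> (z - xs) \<ge> 0}"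

definition opt_value :: "'a set \<Rightarrow> ('a \<Rightarrow> real) \<Rightarrow> real" where
  "opt_value D f = (INF z\<in>D. f z)"

definition solution_set :: "'a set \<Rightarrow> ('a \<Rightarrow> real) \<Rightarrow> 'a set" where
  "solution_set D f = {z \<in> D. f z = opt_value D f}"

definition pseudo_convex_on :: "'a::euclidean_space set \<Rightarrow> ('a \<Rightarrow> real) \<Rightarrow> ('a \<Rightarrow> 'a) \<Rightarrow> bool" where
  "pseudo_convex_on D f f' \<longleftrightarrow>
     (\<forall>x\<in>D. \<forall>y\<in>D. f' x \<bullet> (y - x) \<ge> 0 \<longrightarrow> f y \<ge> f x)"

definition limit_point_seq :: "(nat \<Rightarrow> 'a::topological_space) \<Rightarrow> 'a \<Rightarrow> bool" where
  "limit_point_seq x p \<longleftrightarrow> (\<exists>r. strict_mono r \<and> (x \<circ> r) \<longlonglongrightarrow> p)"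

text \<open>An infinite (non-terminating) run of Method CGMS. x k = x^k, y k = y^k,
  lam k = lambda_k, l k = the value of the counter l when iteration k starts.\<close>
definition cgms_run ::
  "'a::euclidean_space set \<Rightarrow> ('a \<Rightarrow> real) \<Rightarrow> ('a \<Rightarrow> 'a) \<Rightarrow> real \<Rightarrow> (nat \<Rightarrow> real)
   \<Rightarrow> (nat \<Rightarrow> 'a) \<Rightarrow> (nat \<Rightarrow> 'a) \<Rightarrow> (nat \<Rightarrow> real) \<Rightarrow> (nat \<Rightarrow> nat) \<Rightarrow> bool" where
  "cgms_run D f f' \<beta> \<tau> x y lam l \<longleftrightarrow>
     x 0 \<in> D \<and> 0 < \<beta> \<and> \<beta> < 1 \<and> (\<forall>i. 0 < \<tau> i \<and> \<tau> i < 1) \<and> \<tau> \<longlonglongrightarrow> 0 \<and>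
     l 0 = 0 \<and> 0 < lam 0 \<and> lam 0 \<le> \<tau> 0 \<and>
     (\<forall>k. y k \<in> lin_min_set D f' (x k)
        \<and> f' (x k) \<bullet> (y k - x k) \<noteq> 0
        \<and> x (Suc k) = x k + lam k *\<^sub>R (y k - x k)
        \<and> (if f (x (Suc k)) \<le> f (x k) + \<beta> * lam k * (f' (x k) \<bullet> (y k - x k))
           then l (Suc k) = l k \<and> lam k \<le> lam (Suc k) \<and> lam (Suc k) \<le> \<tau> (l k)
           else l (Suc k) = Suc (l k) \<and> 0 < lam (Suc k)
                \<and> lam (Suc k) \<le> min (lam k) (\<tau> (Suc (l k)))))"

end

theory Submission
  imports Defs
begin

text \<open>
  By uniform continuity of \<open>f'\<close> on the compact set \<open>D\<close>, the Armijo test is passed by every step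
  size below a threshold that depends only on how negative the gap
  \<open>\<langle>f'(x\<^sup>k), y\<^sup>k - x\<^sup>k\<rangle>\<close> is. Hence the gap cannot stay below some \<open>-\<delta>\<close>: infinitely
  many rejections drive \<open>\<lambda>\<^sub>k\<close> to 0, so that small steps get accepted, while eventual
  acceptance makes \<open>\<lambda>\<^sub>k\<close> nondecreasing and \<open>f\<close> decrease by a fixed amount per step,
  contradicting boundedness of \<open>f\<close> on \<open>D\<close>. A subsequence along which the gap tends to 0
  has a stationary limit point. Under pseudo-convexity stationary points are minimizers, so a
  small gap forces \<open>f(x\<^sup>k)\<close> close to \<open>f\<^sup>*\<close>; above that level \<open>f\<close> can only decrease, and
  eventually a single step raises \<open>f\<close> by arbitrarily little, so \<open>f(x\<^sup>k) \<rightarrow> f\<^sup>*\<close>.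
\<close>

lemma strict_mono_choice_frequently:
  fixes P :: "nat \<Rightarrow> nat \<Rightarrow> bool"
  assumes "\<And>n. \<exists>\<^sub>F k in sequentially. P n k"
  shows "\<exists>r. strict_mono r \<and> (\<forall>n. P n (r n))"
proof -
  have "\<exists>r. \<forall>n. P n (r n) \<and> r n < r (Suc n)"
  proof (rule dependent_nat_choice)
    show "\<exists>k. P 0 k" using assms[of 0] by (auto simp: frequently_sequentially)
    fix k n
    obtain j where "Suc k \<le> j" "P (Suc n) j" using assms[of "Suc n"] by (auto simp: frequently_sequentially)
    then show "\<exists>j. P (Suc n) j \<and> k < j" by auto
  qed
  then show ?thesis by (auto simp: strict_mono_Suc_iff)
qed

lemma eventually_less_of_frequently_less:
  fixes a :: "nat \<Rightarrow> real"
  assumes "0 < e"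
    and "\<forall>\<^sub>F k in sequentially. c \<le> a k \<longrightarrow> a (Suc k) \<le> a k"
    and "\<forall>\<^sub>F k in sequentially. a (Suc k) < a k + e"
    and "\<exists>\<^sub>F k in sequentially. a k < c"
  shows "\<forall>\<^sub>F k in sequentially. a k < c + e"
proof -
  obtain N where N: "\<And>k. N \<le> k \<Longrightarrow> (c \<le> a k \<longrightarrow> a (Suc k) \<le> a k) \<and> a (Suc k) < a k + e"
    using eventually_conj[OF assms(2,3)] unfolding eventually_sequentially by blast
  obtain k0 where k0: "N \<le> k0" "a k0 < c"
    using assms(4) unfolding frequently_sequentially by blast
  have "a k < c + e" if "k0 \<le> k" for k
    using that
  proof (induction k rule: dec_induct)
    case base
    then show ?case using k0 \<open>0 < e\<close> by simp
  next
    case (step k)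
    then show ?case using N[of k] k0 by (cases "c \<le> a k") auto
  qed
  then show ?thesis unfolding eventually_sequentially by blast
qed

lemma uniform_decrease_unbounded:
  fixes a :: "nat \<Rightarrow> real"
  assumes "0 < c" and "\<And>k. M \<le> k \<Longrightarrow> a (Suc k) \<le> a k - c"
  shows "\<exists>k. a k < b"
proof -
  have decrease: "a (M + j) \<le> a M - real j * c" for j
  proof (induction j)
    case (Suc j)
    then show ?case using assms(2)[of "M + j"] by (simp add: algebra_simps)
  qed simp
  obtain j where "a M - b < real j * c"
    using ex_less_of_nat_mult[OF \<open>0 < c\<close>] by blast
  then have "a (M + j) < b" using decrease[of j] by linarith
  then show ?thesis ..
qed

lemma opt_value_le:
  assumes "compact D" "continuous_on D f" "z \<in> D"
  shows "opt_value D f \<le> f z"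
  unfolding opt_value_def
  using assms by (intro cINF_lower bounded_imp_bdd_below compact_imp_bounded compact_continuous_image) auto

lemma stationary_in_solution_set:
  assumes "pseudo_convex_on D f f'" and "p \<in> stationary_set D f'"
  shows "p \<in> solution_set D f"
proof -
  have pD: "p \<in> D" and min: "\<And>z. z \<in> D \<Longrightarrow> f p \<le> f z"
    using assms unfolding pseudo_convex_on_def stationary_set_def by auto
  have "opt_value D f = f p"
    unfolding opt_value_def
    by (rule antisym[OF cINF_lower cINF_greatest]) (use pD min in \<open>auto simp: bdd_below_def\<close>)
  then show ?thesis using pD by (simp add: solution_set_def)
qed

lemma stationary_of_limit:
  assumes "closed D" and "continuous_on D f'"
    and X: "\<And>n. X n \<in> D" "X \<longlonglongrightarrow> p" and "Y \<longlonglongrightarrow> 0"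
    and Y_le: "\<And>n z. z \<in> D \<Longrightarrow> Y n \<le> f' (X n) \<bullet> (z - X n)"
  shows "p \<in> stationary_set D f'"
proof -
  have pD: "p \<in> D" using closed_sequentially[OF \<open>closed D\<close> X] .
  have "0 \<le> f' p \<bullet> (z - p)" if "z \<in> D" for z
  proof (rule tendsto_le[OF trivial_limit_sequentially _ \<open>Y \<longlonglongrightarrow> 0\<close>])
    show "(\<lambda>n. f' (X n) \<bullet> (z - X n)) \<longlonglongrightarrow> f' p \<bullet> (z - p)"
      using X pD by (intro tendsto_intros continuous_on_tendsto_compose[OF \<open>continuous_on D f'\<close>]) auto
    show "\<forall>\<^sub>F n in sequentially. Y n \<le> f' (X n) \<bullet> (z - X n)" using Y_le \<open>z \<in> D\<close> by simp
  qed
  then show ?thesis using pD by (auto simp: stationary_set_def)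
qed

lemma mean_value_segment:
  fixes f :: "'a::real_inner \<Rightarrow> real"
  assumes "convex D" "u \<in> D" "v \<in> D" "0 < t" "t \<le> 1"
    and der: "\<And>z. z \<in> D \<Longrightarrow> (f has_derivative (\<lambda>h. f' z \<bullet> h)) (at z)"
  obtains s where "0 < s" "s < t" "u + s *\<^sub>R (v - u) \<in> D"
    "f (u + t *\<^sub>R (v - u)) - f u = t * (f' (u + s *\<^sub>R (v - u)) \<bullet> (v - u))"
proof -
  have seg: "u + s *\<^sub>R (v - u) \<in> D" if "0 \<le> s" "s \<le> 1" for s
  proof -
    have "u + s *\<^sub>R (v - u) = (1 - s) *\<^sub>R u + s *\<^sub>R v" by (simp add: algebra_simps)
    then show ?thesis using assms(1-3) that by (simp add: convexD)
  qed
  have "((\<lambda>s. f (u + s *\<^sub>R (v - u))) has_derivative (\<lambda>r. r * (f' (u + s *\<^sub>R (v - u)) \<bullet> (v - u))))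
          (at s within {0..t})" if "0 \<le> s" "s \<le> t" for s
  proof -
    have "((\<lambda>s. u + s *\<^sub>R (v - u)) has_derivative (\<lambda>r. r *\<^sub>R (v - u))) (at s within {0..t})"
      by (auto intro!: derivative_eq_intros)
    from has_derivative_compose[OF this der[OF seg]] that \<open>t \<le> 1\<close> show ?thesis
      by (simp add: o_def inner_scaleR_right)
  qed
  from mvt_simple[OF \<open>0 < t\<close> this] obtain s where "s \<in> {0<..<t}"
    "f (u + t *\<^sub>R (v - u)) - f (u + 0 *\<^sub>R (v - u)) = (t - 0) * (f' (u + s *\<^sub>R (v - u)) \<bullet> (v - u))"
    by blast
  with seg[of s] \<open>t \<le> 1\<close> show ?thesis by (intro that) auto
qed

lemma armijo_uniform:
  fixes f :: "'a::euclidean_space \<Rightarrow> real"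
  assumes "convex D" "compact D" "\<beta> < 1" "0 < \<delta>"
    and der: "\<And>z. z \<in> D \<Longrightarrow> (f has_derivative (\<lambda>h. f' z \<bullet> h)) (at z)"
    and "continuous_on D f'"
  obtains \<eta> where "0 < \<eta>"
    "\<And>u v t. u \<in> D \<Longrightarrow> v \<in> D \<Longrightarrow> f' u \<bullet> (v - u) \<le> -\<delta> \<Longrightarrow> 0 < t \<Longrightarrow> t \<le> \<eta> \<Longrightarrow>
       f (u + t *\<^sub>R (v - u)) \<le> f u + \<beta> * t * (f' u \<bullet> (v - u))"
proof -
  define R where "R = diameter D + 1"
  have R: "norm (v - u) < R" if "u \<in> D" "v \<in> D" for u v
    using diameter_bounded_bound[OF compact_imp_bounded[OF \<open>compact D\<close>] that]
    by (simp add: R_def dist_norm norm_minus_commute)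
  have "0 < R" using diameter_ge_0[OF compact_imp_bounded[OF \<open>compact D\<close>]] by (simp add: R_def)
  define e where "e = (1 - \<beta>) * \<delta> / R"
  have "0 < e" using assms \<open>0 < R\<close> by (simp add: e_def)
  then obtain \<rho> where "0 < \<rho>" and \<rho>: "\<And>a b. a \<in> D \<Longrightarrow> b \<in> D \<Longrightarrow> dist b a < \<rho> \<Longrightarrow> dist (f' b) (f' a) < e"
    using compact_uniformly_continuous[OF \<open>continuous_on D f'\<close> \<open>compact D\<close>]
    unfolding uniformly_continuous_on_def by metis
  define \<eta> where "\<eta> = min 1 (\<rho> / R)"
  have "f (u + t *\<^sub>R (v - u)) \<le> f u + \<beta> * t * (f' u \<bullet> (v - u))"
    if u: "u \<in> D" and v: "v \<in> D" and g: "f' u \<bullet> (v - u) \<le> -\<delta>" and t: "0 < t" "t \<le> \<eta>" for u v t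
  proof -
    define d where "d = v - u"
    obtain s where s: "0 < s" "s < t" and w: "u + s *\<^sub>R d \<in> D"
      and mv: "f (u + t *\<^sub>R d) - f u = t * (f' (u + s *\<^sub>R d) \<bullet> d)"
      using mean_value_segment[OF \<open>convex D\<close> u v t(1) _ der] t by (auto simp: \<eta>_def d_def)
    have "dist (u + s *\<^sub>R d) u = s * norm d" using s by (simp add: dist_norm)
    also have "\<dots> \<le> \<rho> / R * norm d"
      using s t by (intro mult_right_mono) (auto simp: \<eta>_def)
    also have "\<dots> < \<rho>" using R[OF u v] \<open>0 < R\<close> \<open>0 < \<rho>\<close> by (simp add: d_def field_simps)
    finally have "norm (f' (u + s *\<^sub>R d) - f' u) \<le> e" using \<rho>[OF u w] by (simp add: dist_norm)
    \<comment> \<open>\<open>e\<close> is chosen so that the slope along the segment stays within \<open>(1 - \<beta>) \<delta>\<close> of the slope at \<open>u\<close>\<close>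
    have "(f' (u + s *\<^sub>R d) - f' u) \<bullet> d \<le> norm (f' (u + s *\<^sub>R d) - f' u) * norm d"
      by (rule norm_cauchy_schwarz)
    also have "\<dots> \<le> e * R" using \<open>_ \<le> e\<close> R[OF u v] \<open>0 < e\<close> by (intro mult_mono) (auto simp: d_def)
    also have "\<dots> = (1 - \<beta>) * \<delta>" using \<open>0 < R\<close> by (simp add: e_def)
    also have "\<dots> \<le> (1 - \<beta>) * - (f' u \<bullet> d)" using g assms(3) by (intro mult_left_mono) (auto simp: d_def)
    finally have "f' (u + s *\<^sub>R d) \<bullet> d \<le> \<beta> * (f' u \<bullet> d)" by (simp add: inner_diff_left algebra_simps)
    then have "t * (f' (u + s *\<^sub>R d) \<bullet> d) \<le> t * (\<beta> * (f' u \<bullet> d))"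
      using t by (intro mult_left_mono) auto
    then show ?thesis using mv by (simp add: d_def algebra_simps)
  qed
  moreover have "0 < \<eta>" using \<open>0 < \<rho>\<close> \<open>0 < R\<close> by (simp add: \<eta>_def)
  ultimately show ?thesis using that by blast
qed

locale cgms =
  fixes D :: "'a::euclidean_space set" and f :: "'a \<Rightarrow> real" and f' :: "'a \<Rightarrow> 'a"
    and \<beta> :: real and \<tau> :: "nat \<Rightarrow> real"
    and x y :: "nat \<Rightarrow> 'a" and lam :: "nat \<Rightarrow> real" and l :: "nat \<Rightarrow> nat"
  assumes convex: "convex D" and compact: "compact D"
    and der: "\<And>z. z \<in> D \<Longrightarrow> (f has_derivative (\<lambda>h. f' z \<bullet> h)) (at z)"
    and continuous_f': "continuous_on D f'"
    and run: "cgms_run D f f' \<beta> \<tau> x y lam l"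
begin

definition gap :: "nat \<Rightarrow> real" where
  "gap k = f' (x k) \<bullet> (y k - x k)"

definition accepted :: "nat \<Rightarrow> bool" where
  "accepted k \<longleftrightarrow> f (x (Suc k)) \<le> f (x k) + \<beta> * lam k * gap k"

lemma beta: "0 < \<beta>" "\<beta> < 1"
  and tau: "0 < \<tau> i" "\<tau> i < 1" "\<tau> \<longlonglongrightarrow> 0"
  using run unfolding cgms_run_def by auto

lemma y_in_lin_min_set: "y k \<in> lin_min_set D f' (x k)"
  and gap_nonzero: "gap k \<noteq> 0"
  and x_Suc: "x (Suc k) = x k + lam k *\<^sub>R (y k - x k)"
  and accepted_step: "accepted k \<Longrightarrow> l (Suc k) = l k \<and> lam k \<le> lam (Suc k) \<and> lam (Suc k) \<le> \<tau> (l k)"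
  and rejected_step: "\<not> accepted k \<Longrightarrow> l (Suc k) = Suc (l k) \<and> 0 < lam (Suc k) \<and> lam (Suc k) \<le> \<tau> (Suc (l k))"
  using run unfolding cgms_run_def accepted_def gap_def by (auto split: if_splits dest: spec[of _ k])

lemma bounded_D: "bounded D"
  using compact by (rule compact_imp_bounded)

lemma continuous_f: "continuous_on D f"
  by (rule continuous_at_imp_continuous_on) (use der has_derivative_continuous in blast)

lemma y_in_D: "y k \<in> D"
  using y_in_lin_min_set by (simp add: lin_min_set_def)

lemma iterate_invariant: "x k \<in> D \<and> 0 < lam k \<and> lam k \<le> \<tau> (l k)"
proof (induction k)
  case 0
  then show ?case using run by (simp add: cgms_run_def)
next
  case (Suc k)
  have "lam k \<le> 1" using Suc tau(2)[of "l k"] by linarith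
  moreover have "x (Suc k) = (1 - lam k) *\<^sub>R x k + lam k *\<^sub>R y k"
    using x_Suc[of k] by (simp add: algebra_simps)
  ultimately have "x (Suc k) \<in> D" using Suc y_in_D convex by (simp add: convexD)
  moreover have "0 < lam (Suc k) \<and> lam (Suc k) \<le> \<tau> (l (Suc k))"
    using Suc accepted_step[of k] rejected_step[of k] by (cases "accepted k") auto
  ultimately show ?case by blast
qed

lemma x_in_D: "x k \<in> D" and lam_pos: "0 < lam k" and lam_le_tau: "lam k \<le> \<tau> (l k)"
  using iterate_invariant by auto

lemma gap_le: "z \<in> D \<Longrightarrow> gap k \<le> f' (x k) \<bullet> (z - x k)"
  using y_in_lin_min_set[of k] by (auto simp: lin_min_set_def gap_def inner_diff_right)

lemma gap_neg: "gap k < 0"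
  using gap_le[of "x k" k] x_in_D[of k] gap_nonzero[of k] by simp

lemma f_decreasing_if_accepted: "accepted k \<Longrightarrow> f (x (Suc k)) \<le> f (x k)"
  using mult_pos_neg[OF mult_pos_pos[OF beta(1) lam_pos] gap_neg, of k k]
  unfolding accepted_def by linarith

lemma opt_value_le_f: "opt_value D f \<le> f (x k)"
  using opt_value_le[OF compact continuous_f x_in_D] .

lemma lam_tendsto_0_if_frequently_rejected:
  assumes "\<exists>\<^sub>F k in sequentially. \<not> accepted k"
  shows "lam \<longlonglongrightarrow> 0"
proof -
  have "l k \<le> l (Suc k)" for k
    using accepted_step[of k] rejected_step[of k] by (cases "accepted k") auto
  then have "mono l" by (simp add: mono_iff_le_Suc)
  have "\<forall>\<^sub>F k in sequentially. N \<le> l k" for N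
  proof (induction N)
    case (Suc N)
    then obtain K where K: "\<And>k. K \<le> k \<Longrightarrow> N \<le> l k" by (auto simp: eventually_sequentially)
    obtain k where "K \<le> k" "\<not> accepted k" using assms by (auto simp: frequently_sequentially)
    then have "Suc N \<le> l k'" if "Suc k \<le> k'" for k'
      using K[of k] rejected_step[of k] monoD[OF \<open>mono l\<close> that] by simp
    then show ?case by (auto simp: eventually_sequentially)
  qed simp
  then have "filterlim l at_top sequentially" by (simp add: filterlim_at_top)
  then have "(\<lambda>k. \<tau> (l k)) \<longlonglongrightarrow> 0" using filterlim_compose[OF tau(3)] by blast
  then show ?thesis
    by (rule tendsto_sandwich[OF _ _ tendsto_const, rotated 2])
      (use lam_pos lam_le_tau in \<open>auto intro!: always_eventually less_imp_le\<close>)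
qed

lemma eventually_accepted_or_small_step:
  assumes "0 < \<eta>"
  shows "\<forall>\<^sub>F k in sequentially. accepted k \<or> lam k < \<eta>"
proof (cases "\<exists>\<^sub>F k in sequentially. \<not> accepted k")
  case True
  then show ?thesis
    using order_tendstoD(2)[OF lam_tendsto_0_if_frequently_rejected assms] by (auto elim: eventually_mono)
next
  case False
  then show ?thesis by (auto simp: not_frequently elim: eventually_mono)
qed

lemma eventually_accepted_if_gap_le:
  assumes "0 < \<delta>"
  shows "\<forall>\<^sub>F k in sequentially. gap k \<le> -\<delta> \<longrightarrow> accepted k"
proof -
  obtain \<eta> where "0 < \<eta>" and \<eta>: "\<And>u v t. u \<in> D \<Longrightarrow> v \<in> D \<Longrightarrow> f' u \<bullet> (v - u) \<le> -\<delta> \<Longrightarrow> 0 < t \<Longrightarrow> t \<le> \<eta> \<Longrightarrow>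
       f (u + t *\<^sub>R (v - u)) \<le> f u + \<beta> * t * (f' u \<bullet> (v - u))"
    using armijo_uniform[OF convex compact beta(2) assms der continuous_f'] by blast
  have "accepted k" if "gap k \<le> -\<delta>" "lam k < \<eta>" for k
    using \<eta>[of "x k" "y k" "lam k"] x_in_D[of k] y_in_lin_min_set[of k] that lam_pos[of k]
    unfolding accepted_def gap_def x_Suc lin_min_set_def by auto
  then show ?thesis using eventually_accepted_or_small_step[OF \<open>0 < \<eta>\<close>] by (auto elim: eventually_mono)
qed

lemma frequently_gap_gt:
  assumes "0 < \<delta>"
  shows "\<exists>\<^sub>F k in sequentially. -\<delta> < gap k"
proof (rule ccontr)
  assume "\<not> ?thesis"
  then have "\<forall>\<^sub>F k in sequentially. accepted k \<and> gap k \<le> -\<delta>"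
    using eventually_accepted_if_gap_le[OF assms]
    by (auto simp: not_frequently not_less elim: eventually_rev_mp)
  then obtain M where M: "\<And>k. M \<le> k \<Longrightarrow> accepted k \<and> gap k \<le> -\<delta>"
    by (auto simp: eventually_sequentially)
  have lam_M: "lam M \<le> lam k" if "M \<le> k" for k
    using that by (induction k rule: dec_induct) (use M accepted_step in \<open>auto intro: order_trans\<close>)
  have "f (x (Suc k)) \<le> f (x k) - \<beta> * lam M * \<delta>" if "M \<le> k" for k
  proof -
    have "lam k * gap k \<le> lam M * gap k"
      using lam_M[OF that] gap_neg[of k] by (intro mult_right_mono_neg) auto
    also have "\<dots> \<le> lam M * -\<delta>"
      using M[OF that] lam_pos[of M] by (intro mult_left_mono) auto
    finally have "\<beta> * (lam k * gap k) \<le> \<beta> * (lam M * -\<delta>)"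
      using beta(1) by (intro mult_left_mono) auto
    then show ?thesis using M[OF that] unfolding accepted_def by (simp add: mult.assoc)
  qed
  then obtain k where "f (x k) < opt_value D f"
    using uniform_decrease_unbounded[of "\<beta> * lam M * \<delta>"] beta(1) lam_pos[of M] assms by fastforce
  then show False using opt_value_le_f[of k] by simp
qed

lemma stationary_limit_of_gap_subseq:
  assumes "\<And>n. - inverse (real (Suc n)) < gap (K n)"
  obtains r p where "strict_mono r" "(x \<circ> K \<circ> r) \<longlonglongrightarrow> p" "p \<in> stationary_set D f'"
proof -
  obtain r p where "strict_mono r" and lim: "(x \<circ> K \<circ> r) \<longlonglongrightarrow> p"
    using compact x_in_D unfolding compact_def by (metis comp_apply)
  have "(\<lambda>n. - inverse (real (Suc n))) \<longlonglongrightarrow> 0"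
    using tendsto_minus[OF LIMSEQ_inverse_real_of_nat] by simp
  then have "(\<lambda>n. gap (K n)) \<longlonglongrightarrow> 0"
    by (rule tendsto_sandwich[rotated 2, OF _ tendsto_const])
      (use assms gap_neg in \<open>auto intro!: always_eventually less_imp_le\<close>)
  then have "((\<lambda>n. gap (K n)) \<circ> r) \<longlonglongrightarrow> 0"
    using \<open>strict_mono r\<close> by (rule LIMSEQ_subseq_LIMSEQ)
  then have "p \<in> stationary_set D f'"
    using compact_imp_closed[OF compact] continuous_f' x_in_D lim gap_le
    by (intro stationary_of_limit[of D f' "x \<circ> K \<circ> r"]) auto
  with \<open>strict_mono r\<close> lim show ?thesis by (rule that)
qed

lemma stationary_limit_point_exists: "\<exists>p. limit_point_seq x p \<and> p \<in> stationary_set D f'"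
proof -
  obtain K where "strict_mono K" and K: "\<And>n. - inverse (real (Suc n)) < gap (K n)"
    using strict_mono_choice_frequently[of "\<lambda>n k. - inverse (real (Suc n)) < gap k"] frequently_gap_gt
    by auto
  obtain r p where "strict_mono r" "(x \<circ> K \<circ> r) \<longlonglongrightarrow> p" "p \<in> stationary_set D f'"
    using stationary_limit_of_gap_subseq[OF K] by blast
  with \<open>strict_mono K\<close> show ?thesis
    unfolding limit_point_seq_def by (metis strict_mono_o o_assoc)
qed

lemma eventually_f_increase_less:
  assumes "0 < \<epsilon>"
  shows "\<forall>\<^sub>F k in sequentially. f (x (Suc k)) < f (x k) + \<epsilon>"
proof -
  obtain \<rho> where "0 < \<rho>" and \<rho>: "\<And>a b. a \<in> D \<Longrightarrow> b \<in> D \<Longrightarrow> dist b a < \<rho> \<Longrightarrow> dist (f b) (f a) < \<epsilon>"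
    using compact_uniformly_continuous[OF continuous_f compact] assms
    unfolding uniformly_continuous_on_def by metis
  define \<eta> where "\<eta> = \<rho> / (diameter D + 1)"
  have "0 \<le> diameter D" by (rule diameter_ge_0[OF bounded_D])
  then have "0 < \<eta>" using \<open>0 < \<rho>\<close> by (simp add: \<eta>_def)
  have "f (x (Suc k)) < f (x k) + \<epsilon>" if "accepted k \<or> lam k < \<eta>" for k
  proof (cases "accepted k")
    case True
    then show ?thesis using f_decreasing_if_accepted assms by fastforce
  next
    case False
    have "dist (x (Suc k)) (x k) = lam k * dist (y k) (x k)"
      using lam_pos[of k] by (simp add: x_Suc dist_norm)
    also have "\<dots> \<le> \<eta> * diameter D"
      using diameter_bounded_bound[OF bounded_D y_in_D x_in_D, of k k] lam_pos[of k] that False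
        \<open>0 \<le> diameter D\<close> by (intro mult_mono) auto
    also have "\<dots> < \<rho>" using \<open>0 < \<rho>\<close> \<open>0 \<le> diameter D\<close> by (simp add: \<eta>_def field_simps)
    finally show ?thesis using \<rho>[OF x_in_D[of k] x_in_D[of "Suc k"]] by (simp add: dist_real_def abs_less_iff)
  qed
  then show ?thesis
    using eventually_accepted_or_small_step[OF \<open>0 < \<eta>\<close>] by (auto elim: eventually_mono)
qed

lemma gap_gt_imp_f_less:
  assumes "pseudo_convex_on D f f'" and "0 < \<epsilon>"
  shows "\<exists>\<delta>>0. \<forall>k. -\<delta> < gap k \<longrightarrow> f (x k) < opt_value D f + \<epsilon>"
proof (rule ccontr)
  assume "\<not> ?thesis"
  then have "\<exists>k. - inverse (real (Suc n)) < gap k \<and> opt_value D f + \<epsilon> \<le> f (x k)" for n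
    by (auto simp: not_less dest!: spec[of _ "inverse (real (Suc n))"])
  then obtain K where K: "\<And>n. - inverse (real (Suc n)) < gap (K n)"
    and f_K: "\<And>n. opt_value D f + \<epsilon> \<le> f (x (K n))"
    by metis
  obtain r p where lim: "(x \<circ> K \<circ> r) \<longlonglongrightarrow> p" and p: "p \<in> stationary_set D f'"
    using stationary_limit_of_gap_subseq[OF K] by blast
  then have "p \<in> D" by (simp add: stationary_set_def)
  have "(\<lambda>n. f ((x \<circ> K \<circ> r) n)) \<longlonglongrightarrow> f p"
    using continuous_on_tendsto_compose[OF continuous_f lim \<open>p \<in> D\<close>] x_in_D by simp
  then have "opt_value D f + \<epsilon> \<le> f p"
    by (rule LIMSEQ_le_const) (use f_K in auto)
  moreover have "f p = opt_value D f"
    using stationary_in_solution_set[OF assms(1) p] by (simp add: solution_set_def)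
  ultimately show False using \<open>0 < \<epsilon>\<close> by simp
qed

lemma f_tendsto_opt_value:
  assumes "pseudo_convex_on D f f'"
  shows "(\<lambda>k. f (x k)) \<longlonglongrightarrow> opt_value D f"
proof (rule order_tendstoI)
  fix a
  assume "opt_value D f < a"
  define \<epsilon> where "\<epsilon> = (a - opt_value D f) / 2"
  have "0 < \<epsilon>" using \<open>opt_value D f < a\<close> by (simp add: \<epsilon>_def)
  obtain \<delta> where "0 < \<delta>" and \<delta>: "\<And>k. -\<delta> < gap k \<Longrightarrow> f (x k) < opt_value D f + \<epsilon>"
    using gap_gt_imp_f_less[OF assms \<open>0 < \<epsilon>\<close>] by blast
  have "\<forall>\<^sub>F k in sequentially. f (x k) < opt_value D f + \<epsilon> + \<epsilon>"
  proof (rule eventually_less_of_frequently_less[OF \<open>0 < \<epsilon>\<close>])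
    show "\<forall>\<^sub>F k in sequentially. opt_value D f + \<epsilon> \<le> f (x k) \<longrightarrow> f (x (Suc k)) \<le> f (x k)"
      using eventually_accepted_if_gap_le[OF \<open>0 < \<delta>\<close>]
      by (elim eventually_mono) (meson \<delta> f_decreasing_if_accepted not_le)
    show "\<forall>\<^sub>F k in sequentially. f (x (Suc k)) < f (x k) + \<epsilon>"
      by (rule eventually_f_increase_less[OF \<open>0 < \<epsilon>\<close>])
    show "\<exists>\<^sub>F k in sequentially. f (x k) < opt_value D f + \<epsilon>"
      using frequently_gap_gt[OF \<open>0 < \<delta>\<close>] by (rule frequently_elim1) (rule \<delta>)
  qed
  then show "\<forall>\<^sub>F k in sequentially. f (x k) < a" by (simp add: \<epsilon>_def)
next
  fix a
  assume "a < opt_value D f"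
  then show "\<forall>\<^sub>F k in sequentially. a < f (x k)"
    using opt_value_le_f by (auto intro: always_eventually order_less_le_trans)
qed

lemma limit_point_in_solution_set:
  assumes "pseudo_convex_on D f f'" and "limit_point_seq x p"
  shows "p \<in> solution_set D f"
proof -
  obtain r where "strict_mono r" and lim: "(x \<circ> r) \<longlonglongrightarrow> p"
    using assms(2) unfolding limit_point_seq_def by blast
  have "p \<in> D" using closed_sequentially[OF compact_imp_closed[OF compact] _ lim] x_in_D by simp
  have "(\<lambda>n. f ((x \<circ> r) n)) \<longlonglongrightarrow> f p"
    using continuous_on_tendsto_compose[OF continuous_f lim \<open>p \<in> D\<close>] x_in_D by simp
  moreover have "((\<lambda>k. f (x k)) \<circ> r) \<longlonglongrightarrow> opt_value D f"
    using f_tendsto_opt_value[OF assms(1)] \<open>strict_mono r\<close> by (rule LIMSEQ_subseq_LIMSEQ)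
  ultimately have "f p = opt_value D f" by (simp add: LIMSEQ_unique o_def)
  then show ?thesis using \<open>p \<in> D\<close> by (simp add: solution_set_def)
qed

end

theorem theorem3p1:
  fixes D :: "'a::euclidean_space set" and f :: "'a \<Rightarrow> real" and f' :: "'a \<Rightarrow> 'a"
    and \<beta> :: real and \<tau> :: "nat \<Rightarrow> real"
    and x y :: "nat \<Rightarrow> 'a" and lam :: "nat \<Rightarrow> real" and l :: "nat \<Rightarrow> nat"
  assumes "D \<noteq> {}" and "convex D" and "closed D" and "bounded D"
    and "\<And>z. (f has_derivative (\<lambda>h. f' z \<bullet> h)) (at z)"
    and "continuous_on UNIV f'"
    and "cgms_run D f f' \<beta> \<tau> x y lam l"
  shows "(\<exists>p. limit_point_seq x p \<and> p \<in> stationary_set D f')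
    \<and> (pseudo_convex_on D f f' \<longrightarrow>
         (\<forall>p. limit_point_seq x p \<longrightarrow> p \<in> solution_set D f)
         \<and> (\<lambda>k. f (x k)) \<longlonglongrightarrow> opt_value D f)"
proof -
  interpret cgms D f f' \<beta> \<tau> x y lam l
    using assms by unfold_locales (auto simp: compact_eq_bounded_closed intro: continuous_on_subset)
  show ?thesis
    using stationary_limit_point_exists limit_point_in_solution_set f_tendsto_opt_value by blast
qed

end
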